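(* Let $q$ be a prime power and $N\ge n\ge1$. Then $\chi_1(N\times n,q)=q^N$.
   Context: $\mathbb{F}_q^{N\times n}$ is the set of $N\times n$ matrices over $\mathbb{F}_q$. An exactly $d$-distance coloring is a map $\Gamma:\mathbb{F}_q^{N\times n}\to\{1,\dots,L\}$ such that $\Gamma(M_1)\ne\Gamma(M_2)$ whenever $\mathrm{Rk}(M_1-M_2)=d$. $\chi_d(N\times n,q)$ denotes the minimum number $L$ of colors in an exactly $d$-distance coloring. *)

theory Defs
  imports "Jordan_Normal_Form.DL_Rank"
begin

definition exact_dist_coloring ::
  "nat \<Rightarrow> nat \<Rightarrow> nat \<Rightarrow> nat \<Rightarrow> ('a::field mat \<Rightarrow> nat) \<Rightarrow> bool" where
  "exact_dist_coloring N n d L \<Gamma> \<longleftrightarrow>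
     (\<forall>M \<in> carrier_mat N n. \<Gamma> M \<in> {1..L}) \<and>
     (\<forall>M1 \<in> carrier_mat N n. \<forall>M2 \<in> carrier_mat N n.
        vec_space.rank N (M1 - M2) = d \<longrightarrow> \<Gamma> M1 \<noteq> \<Gamma> M2)"

definition chi :: "nat \<Rightarrow> nat \<Rightarrow> nat \<Rightarrow> 'a::{finite,field} itself \<Rightarrow> nat" where
  "chi d N n (_ :: 'a itself) =
     (LEAST L. \<exists>\<Gamma> :: 'a mat \<Rightarrow> nat. exact_dist_coloring N n d L \<Gamma>)"

end

theory Submission
  imports Defs "HOL-Algebra.Algebraic_Closure_Type" "HOL-Number_Theory.Residues"
    "Berlekamp_Zassenhaus.Berlekamp_Type_Based"
begin

text \<open>
  Lower bound: the matrices supported on the first column differ pairwise by matrices of rank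
  one, so they need \<open>q\<^sup>N\<close> colours.

  Upper bound: choose \<open>\<alpha>\<close> in the algebraic closure of \<open>\<bbbF>\<^sub>q\<close> with \<open>\<alpha>\<^bsup>q\<^sup>N\<^esup> = \<alpha>\<close> such that
  \<open>1, \<alpha>, \<dots>, \<alpha>\<^bsup>N-1\<^esup>\<close> are linearly independent over \<open>\<bbbF>\<^sub>q\<close>, and colour \<open>M\<close> by
  \<open>x\<^sup>T M x\<close> for \<open>x = (1, \<alpha>, \<alpha>\<^sup>2, \<dots>)\<close>. The colours lie in the field of the \<open>q\<^sup>N\<close> roots of
  \<open>X\<^bsup>q\<^sup>N\<^esup> - X\<close>, and if \<open>M\<^sub>1 - M\<^sub>2 = a b\<^sup>T\<close> has rank one the colours differ by
  \<open>a(\<alpha>) b(\<alpha>) \<noteq> 0\<close>, because \<open>n \<le> N\<close>.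
  Such an \<open>\<alpha>\<close> exists by counting: a root of \<open>X\<^bsup>q\<^sup>N\<^esup> - X\<close> with dependent powers generates a
  subfield of some order \<open>q\<^sup>d\<close>, \<open>d < N\<close>, hence is a root of \<open>X\<^bsup>q\<^sup>d\<^esup> - X\<close>, and
  \<open>q + \<dots> + q\<^bsup>N-1\<^esup> < q\<^sup>N\<close>. Counting roots uses that \<open>q\<close> is a power of the characteristic
  \<open>p\<close> (adjoining an element to an additive subgroup multiplies its size by \<open>p\<close>), which makes
  \<open>X\<^bsup>q\<^sup>N\<^esup> - X\<close> separable and the Frobenius power \<open>x \<mapsto> x\<^bsup>q\<^sup>N\<^esup>\<close> additive.
\<close>

section \<open>Finite fields have prime power order\<close>

definition additively_closed :: "'a::semiring_1 set \<Rightarrow> bool" where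
  "additively_closed S \<longleftrightarrow> 0 \<in> S \<and> (\<forall>x\<in>S. \<forall>y\<in>S. x + y \<in> S)"

lemma additively_closed_of_nat_mult:
  "additively_closed S \<Longrightarrow> x \<in> S \<Longrightarrow> of_nat m * x \<in> S"
  by (induction m) (auto simp: additively_closed_def algebra_simps)

lemma additively_closed_diff:
  fixes S :: "'a::ring_1 set"
  assumes S: "additively_closed S" and "x \<in> S" "y \<in> S" and "CHAR('a) > 0"
  shows "x - y \<in> S"
proof -
  have eq: "x - y = x + of_nat (CHAR('a) - 1) * y"
    using \<open>CHAR('a) > 0\<close> by (simp add: of_nat_diff algebra_simps)
  have "of_nat (CHAR('a) - 1) * y \<in> S" by (rule additively_closed_of_nat_mult[OF S \<open>y \<in> S\<close>])
  with S \<open>x \<in> S\<close> show ?thesis unfolding eq additively_closed_def by blast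
qed

lemma fermat_inverse_of_nat:
  assumes "Factorial_Ring.prime CHAR('a::comm_ring_1)" and "\<not> CHAR('a) dvd m"
  shows "of_nat (m ^ (CHAR('a) - 2)) * (of_nat m :: 'a) = 1"
proof -
  have "CHAR('a) \<ge> 2" using assms(1) prime_ge_2_nat by blast
  hence "m ^ (CHAR('a) - 2) * m = m ^ (CHAR('a) - 1)"
    by (metis Suc_diff_Suc Suc_1 less_le_trans lessI power_Suc2)
  moreover have "[m ^ (CHAR('a) - 1) = 1] (mod CHAR('a))" using fermat_theorem assms by blast
  ultimately show ?thesis by (metis of_nat_1 of_nat_eq_iff_cong_CHAR of_nat_mult)
qed

lemma additively_closed_multiple_imp_mem:
  fixes S :: "'a::field set"
  assumes p: "Factorial_Ring.prime CHAR('a)" and S: "additively_closed S"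
    and "0 < k" "k < CHAR('a)" "of_nat k * x \<in> S"
  shows "x \<in> S"
proof -
  let ?p = "CHAR('a)"
  have "\<not> ?p dvd k" using assms(3,4) by (auto dest: dvd_imp_le)
  hence "of_nat (k ^ (?p - 2)) * of_nat k = (1 :: 'a)" by (rule fermat_inverse_of_nat[OF p])
  hence "x = of_nat (k ^ (?p - 2)) * (of_nat k * x)" by (simp only: mult.assoc[symmetric] mult_1_left)
  also have "\<dots> \<in> S" using additively_closed_of_nat_mult[OF S assms(5)] .
  finally show ?thesis .
qed

lemma inj_on_add_multiples:
  fixes S :: "'a::field set"
  assumes p: "Factorial_Ring.prime CHAR('a)" and S: "additively_closed S" and x: "x \<notin> S"
  shows "inj_on (\<lambda>(s, i). s + of_nat i * x) (S \<times> {..<CHAR('a)})"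
proof -
  let ?p = "CHAR('a)"
  have ordered: False
    if "j < j'" "j' < ?p" "t \<in> S" "t' \<in> S" "t + of_nat j * x = t' + of_nat j' * x" for j j' t t'
  proof -
    have "of_nat (j' - j) * x = of_nat j' * x - of_nat j * x"
      using that(1) by (simp add: of_nat_diff left_diff_distrib)
    also have "\<dots> = (t' + of_nat j' * x) - t' - of_nat j * x" by simp
    also have "\<dots> = (t + of_nat j * x) - t' - of_nat j * x" by (simp only: that(5))
    also have "\<dots> = t - t'" by simp
    finally have "of_nat (j' - j) * x \<in> S"
      using additively_closed_diff[OF S that(3,4)] p prime_gt_0_nat by simp
    hence "x \<in> S" by (rule additively_closed_multiple_imp_mem[OF p S, rotated 2]) (use that(1,2) in auto)
    thus False using x by contradiction
  qed
  show ?thesis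
  proof (rule inj_onI, clarify)
    fix s i s' i' assume "s \<in> S" "i < ?p" "s' \<in> S" "i' < ?p" and eq: "s + of_nat i * x = s' + of_nat i' * x"
    have "i = i'"
    proof (cases i i' rule: linorder_cases)
      case less
      show ?thesis using ordered[OF less \<open>i' < ?p\<close> \<open>s \<in> S\<close> \<open>s' \<in> S\<close> eq] by (rule FalseE)
    next
      case greater
      show ?thesis using ordered[OF greater \<open>i < ?p\<close> \<open>s' \<in> S\<close> \<open>s \<in> S\<close> eq[symmetric]] by (rule FalseE)
    qed
    with eq show "s = s' \<and> i = i'" by simp
  qed
qed

lemma additively_closed_extend:
  fixes S :: "'a::field set"
  assumes p: "Factorial_Ring.prime CHAR('a)" and S: "additively_closed S" and x: "x \<notin> S"
  defines "T \<equiv> (\<lambda>(s, i). s + of_nat i * x) ` (S \<times> {..<CHAR('a)})"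
  shows "additively_closed T" "card T = CHAR('a) * card S" "S \<subset> T"
proof -
  let ?p = "CHAR('a)"
  have p1: "1 < ?p" using prime_gt_1_nat[OF p] .
  have T_mem: "s + of_nat i * x \<in> T" if "s \<in> S" "i < ?p" for s i
    unfolding T_def using that by (intro image_eqI[of _ _ "(s, i)"]) auto
  show "additively_closed T"
    unfolding additively_closed_def
  proof safe
    show "0 \<in> T" using T_mem[of 0 0] S p1 by (simp add: additively_closed_def)
    fix a b assume "a \<in> T" "b \<in> T"
    then obtain s i s' i' where "s \<in> S" "s' \<in> S" and ab: "a = s + of_nat i * x" "b = s' + of_nat i' * x"
      by (auto simp: T_def)
    have "of_nat ((i + i') mod ?p) = (of_nat (i + i') :: 'a)"
      by (simp add: of_nat_eq_iff_cong_CHAR cong_def)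
    hence "a + b = (s + s') + of_nat ((i + i') mod ?p) * x"
      unfolding ab by (simp add: algebra_simps)
    moreover have "(s + s') + of_nat ((i + i') mod ?p) * x \<in> T"
      using S \<open>s \<in> S\<close> \<open>s' \<in> S\<close> p1 by (intro T_mem) (simp_all add: additively_closed_def)
    ultimately show "a + b \<in> T" by (simp only:)
  qed
  show "card T = ?p * card S"
    using inj_on_add_multiples[OF p S x] by (simp add: T_def card_image card_cartesian_product)
  have "S \<subseteq> T" using T_mem[of _ 0] p1 by auto
  moreover have "x \<in> T" using T_mem[of 0 1] S p1 by (simp add: additively_closed_def)
  ultimately show "S \<subset> T" using x by blast
qed

lemma card_finite_field_CHAR_power:
  "\<exists>k. CARD('a::{finite,field}) = CHAR('a) ^ k"
proof -
  have p: "Factorial_Ring.prime CHAR('a)" by (rule prime_CHAR_semidom[OF finite_imp_CHAR_pos[OF finite]])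
  have "\<exists>k. CARD('a) = CHAR('a) ^ k"
    if "additively_closed S" "card S = CHAR('a) ^ j" for S :: "'a set" and j
    using that
  proof (induction "CARD('a) - card S" arbitrary: S j rule: less_induct)
    case less
    show ?case
    proof (cases "S = UNIV")
      case False
      then obtain x where "x \<notin> S" by blast
      from additively_closed_extend[OF p less.prems(1) this] obtain T
        where T: "additively_closed T" "card T = CHAR('a) * card S" "S \<subset> T" by blast
      have "card S < card T" using T(3) by (simp add: psubset_card_mono)
      moreover have "card T \<le> CARD('a)" by (simp add: card_mono)
      ultimately have smaller: "CARD('a) - card T < CARD('a) - card S" by linarith
      show ?thesis
        by (rule less.hyps[OF smaller T(1), of "Suc j"]) (use T(2) less.prems(2) in simp)
    qed (use less.prems in auto)
  qed
  moreover have "additively_closed {0::'a}" "card {0::'a} = CHAR('a) ^ 0"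
    by (simp_all add: additively_closed_def)
  ultimately show ?thesis by blast
qed

section \<open>Finite subfields of the algebraic closure\<close>

lemma power_card_eq_self:
  fixes x :: "'a::idom"
  assumes "finite S" "0 \<in> S" "x \<in> S" and closed: "\<And>y. y \<in> S \<Longrightarrow> x * y \<in> S"
  shows "x ^ card S = x"
proof (cases "x = 0")
  case True
  moreover have "card S > 0" using assms(1,2) by (auto simp: card_gt_0_iff)
  ultimately show ?thesis by simp
next
  case False
  let ?S' = "S - {0}"
  have "bij_betw ((*) x) ?S' ?S'"
  proof (rule bij_betw_imageI)
    show "inj_on ((*) x) ?S'" using False by (auto intro: inj_onI)
    hence "card ((*) x ` ?S') = card ?S'" by (rule card_image)
    moreover have "(*) x ` ?S' \<subseteq> ?S'" using closed False by auto
    ultimately show "(*) x ` ?S' = ?S'" using assms(1) by (simp add: card_subset_eq)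
  qed
  hence "(\<Prod>y\<in>?S'. x * y) = (\<Prod>y\<in>?S'. y)" by (rule prod.reindex_bij_betw)
  hence "x ^ card ?S' * (\<Prod>y\<in>?S'. y) = 1 * (\<Prod>y\<in>?S'. y)" by (simp add: prod.distrib)
  moreover have "(\<Prod>y\<in>?S'. y) \<noteq> 0" using assms(1) by simp
  ultimately have "x ^ card ?S' = 1" by (rule mult_right_cancel[THEN iffD1, rotated])
  moreover have "card S = Suc (card ?S')" by (rule card.remove[OF assms(1,2)])
  ultimately show ?thesis by simp
qed

lemma card_roots_separable:
  fixes p :: "'a::alg_closed_field poly"
  assumes "p \<noteq> 0" and separable: "\<And>x. poly p x = 0 \<Longrightarrow> poly (pderiv p) x \<noteq> 0"
  shows "card {x. poly p x = 0} = Polynomial.degree p"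
proof -
  obtain A where A: "size A = Polynomial.degree p" "p = smult (Polynomial.lead_coeff p) (\<Prod>x\<in>#A. [:-x, 1:])"
    using alg_closed_imp_factorization[OF \<open>p \<noteq> 0\<close>] by blast
  have roots: "{x. poly p x = 0} = set_mset A"
    using \<open>p \<noteq> 0\<close> by (subst A(2)) (auto simp: poly_prod_mset image_iff)
  have simple: "count A r \<le> 1" for r
  proof (rule ccontr)
    assume "\<not> count A r \<le> 1"
    hence "r \<in># A" by (intro count_inI) simp
    then obtain A' where A': "A = add_mset r A'" by (blast dest: multi_member_split)
    have "r \<in># A'" using A' \<open>\<not> count A r \<le> 1\<close> by (intro count_inI) simp
    then obtain B where "A' = add_mset r B" by (blast dest: multi_member_split)
    with A' have "A = add_mset r (add_mset r B)" by simp
    hence "p = [:-r, 1:] * ([:-r, 1:] * smult (Polynomial.lead_coeff p) (\<Prod>x\<in>#B. [:-x, 1:]))"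
      using A(2) by (simp add: mult_ac)
    then obtain q where p_eq: "p = [:-r, 1:] * ([:-r, 1:] * q)" by blast
    have "poly p r = 0 \<and> poly (pderiv p) r = 0" unfolding p_eq pderiv_mult poly_add poly_mult by simp
    thus False using separable by blast
  qed
  have "count A x = count (mset_set (set_mset A)) x" for x
  proof (cases "x \<in># A")
    case True
    hence "count A x > 0" "count (mset_set (set_mset A)) x = 1" by simp_all
    thus ?thesis using simple[of x] by linarith
  qed (simp add: not_in_iff)
  hence "A = mset_set (set_mset A)" by (rule multiset_eqI)
  hence "size A = card (set_mset A)" by (metis size_mset_set)
  thus ?thesis using A(1) roots by simp
qed

text \<open>The copy of \<open>\<bbbF>\<^bsub>q\<^sup>m\<^esub>\<close> inside the algebraic closure of \<open>\<bbbF>\<^sub>q\<close>.\<close>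
definition frob_fixed :: "nat \<Rightarrow> 'a::{finite,field} alg_closure set" where
  "frob_fixed m = {x. x ^ (CARD('a) ^ m) = x}"

lemma frob_fixed_add:
  assumes "x \<in> frob_fixed m" "y \<in> frob_fixed m"
  shows "x + y \<in> frob_fixed m"
proof -
  obtain k where k: "CARD('a) = CHAR('a) ^ k" using card_finite_field_CHAR_power by blast
  have "Factorial_Ring.prime CHAR('a alg_closure)"
    using prime_CHAR_semidom[OF finite_imp_CHAR_pos[OF finite]] by (simp add: CHAR_alg_closure)
  moreover have "CARD('a) ^ m = CHAR('a alg_closure) ^ (k * m)" by (simp add: k power_mult)
  ultimately have "(x + y) ^ (CARD('a) ^ m) = x ^ (CARD('a) ^ m) + y ^ (CARD('a) ^ m)"
    by (rule freshmans_dream')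
  thus ?thesis using assms by (simp add: frob_fixed_def)
qed

lemma frob_fixed_mult: "x \<in> frob_fixed m \<Longrightarrow> y \<in> frob_fixed m \<Longrightarrow> x * y \<in> frob_fixed m"
  by (simp add: frob_fixed_def power_mult_distrib)

lemma frob_fixed_power:
  assumes "x \<in> frob_fixed m"
  shows "x ^ k \<in> frob_fixed m"
proof -
  have "(x ^ k) ^ (CARD('a) ^ m) = (x ^ (CARD('a) ^ m)) ^ k"
    by (simp only: mult.commute[of k] power_mult[symmetric])
  thus ?thesis using assms by (simp add: frob_fixed_def)
qed

lemma frob_fixed_to_ac: "to_ac x \<in> frob_fixed m"
proof -
  have "y ^ (CARD('a) ^ m) = y" for y :: 'a
  proof (induction m)
    case (Suc m)
    have "y ^ (CARD('a) ^ Suc m) = (y ^ (CARD('a) ^ m)) ^ CARD('a)"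
      by (simp only: power_Suc2 power_mult)
    also have "\<dots> = y" using Suc.IH power_card_eq_self[of UNIV y] by simp
    finally show ?case .
  qed simp
  thus ?thesis by (simp add: frob_fixed_def flip: to_ac_power)
qed

lemma frob_fixed_sum:
  assumes "\<And>i. i \<in> A \<Longrightarrow> f i \<in> frob_fixed m"
  shows "sum f A \<in> frob_fixed m"
  using assms
proof (induction A rule: infinite_finite_induct)
  case (insert i A)
  thus ?case by (simp add: frob_fixed_add)
qed (use frob_fixed_to_ac[of 0 m] in simp_all)

lemma finite_card_frob_fixed:
  assumes "m \<ge> 1"
  shows "finite (frob_fixed m :: 'a::{finite,field} alg_closure set)"
    and "card (frob_fixed m :: 'a alg_closure set) = CARD('a) ^ m"
proof -
  define D where "D = CARD('a) ^ m"
  define P :: "'a alg_closure poly" where "P = Polynomial.monom 1 D - Polynomial.monom 1 1"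
  obtain k where k: "CARD('a) = CHAR('a) ^ k" using card_finite_field_CHAR_power by blast
  have "CARD('a) \<ge> 2" using card_mono[of UNIV "{0::'a, 1}"] by simp
  hence "k \<ge> 1" using k by (cases k) auto
  hence "CHAR('a) dvd D" using assms by (simp add: D_def k dvd_power flip: power_mult)
  hence char_D: "(of_nat D :: 'a alg_closure) = 0" by (simp add: of_nat_eq_0_iff_char_dvd)
  have D2: "D \<ge> 2" using \<open>CARD('a) \<ge> 2\<close> assms D_def
    by (metis le_trans power_increasing power_one_right one_le_numeral)
  have roots: "frob_fixed m = {x. poly P x = 0}" by (simp add: frob_fixed_def P_def D_def poly_monom)
  have "Polynomial.coeff P D = 1" using D2 by (simp add: P_def coeff_monom)
  hence "P \<noteq> 0" by auto
  show "finite (frob_fixed m :: 'a alg_closure set)" unfolding roots using \<open>P \<noteq> 0\<close> by (rule poly_roots_finite)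
  have "Polynomial.degree P = D"
  proof (rule antisym)
    show "Polynomial.degree P \<le> D" unfolding P_def using D2 by (intro degree_diff_le) (auto simp: degree_monom_eq)
    show "D \<le> Polynomial.degree P" using \<open>Polynomial.coeff P D = 1\<close> by (intro le_degree) simp
  qed
  moreover have "poly (pderiv P) x = -1" for x by (simp add: P_def pderiv_diff pderiv_monom poly_monom char_D)
  ultimately show "card (frob_fixed m :: 'a alg_closure set) = CARD('a) ^ m"
    unfolding roots D_def[symmetric] using card_roots_separable[OF \<open>P \<noteq> 0\<close>] by simp
qed

section \<open>An element of degree \<open>N\<close>\<close>

definition powers_independent :: "nat \<Rightarrow> 'a::field alg_closure \<Rightarrow> bool" where
  "powers_independent d \<alpha> \<longleftrightarrow> (\<forall>c. (\<Sum>i<d. to_ac (c i) * \<alpha> ^ i) = 0 \<longrightarrow> (\<forall>i<d. c i = 0))"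

lemma powers_independentD:
  "powers_independent d \<alpha> \<Longrightarrow> (\<Sum>i<d. to_ac (c i) * \<alpha> ^ i) = 0 \<Longrightarrow> i < d \<Longrightarrow> c i = 0"
  by (simp add: powers_independent_def)

lemma powers_independent_mono:
  assumes "powers_independent N \<alpha>" "n \<le> N"
  shows "powers_independent n \<alpha>"
  unfolding powers_independent_def
proof (intro allI impI)
  fix c :: "nat \<Rightarrow> 'a" and i
  assume "(\<Sum>i<n. to_ac (c i) * \<alpha> ^ i) = 0" "i < n"
  define c' where "c' i = (if i < n then c i else 0)" for i
  have "(\<Sum>i<N. to_ac (c' i) * \<alpha> ^ i) = (\<Sum>i<n. to_ac (c' i) * \<alpha> ^ i)"
    using \<open>n \<le> N\<close> by (intro sum.mono_neutral_right) (auto simp: c'_def)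
  also have "\<dots> = 0" using \<open>(\<Sum>i<n. to_ac (c i) * \<alpha> ^ i) = 0\<close> by (simp add: c'_def)
  finally have "c' i = 0" using powers_independentD[OF assms(1)] \<open>i < n\<close> \<open>n \<le> N\<close> by simp
  thus "c i = 0" using \<open>i < n\<close> by (simp add: c'_def)
qed

definition span_powers :: "nat \<Rightarrow> 'a::field alg_closure \<Rightarrow> 'a alg_closure set" where
  "span_powers d \<alpha> = range (\<lambda>c. \<Sum>i<d. to_ac (c i) * \<alpha> ^ i)"

lemma span_powers_eq_image_PiE:
  "span_powers d \<alpha> = (\<lambda>c. \<Sum>i<d. to_ac (c i) * \<alpha> ^ i) ` ({..<d} \<rightarrow>\<^sub>E UNIV)"
  unfolding span_powers_def
proof
  show "range (\<lambda>c. \<Sum>i<d. to_ac (c i) * \<alpha> ^ i) \<subseteq> (\<lambda>c. \<Sum>i<d. to_ac (c i) * \<alpha> ^ i) ` ({..<d} \<rightarrow>\<^sub>E UNIV)"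
  proof
    fix y assume "y \<in> range (\<lambda>c. \<Sum>i<d. to_ac (c i) * \<alpha> ^ i)"
    then obtain c where "y = (\<Sum>i<d. to_ac (c i) * \<alpha> ^ i)" by blast
    also have "\<dots> = (\<Sum>i<d. to_ac (restrict c {..<d} i) * \<alpha> ^ i)" by (intro sum.cong) auto
    finally have "y = (\<lambda>c. \<Sum>i<d. to_ac (c i) * \<alpha> ^ i) (restrict c {..<d})" by simp
    moreover have "restrict c {..<d} \<in> {..<d} \<rightarrow>\<^sub>E UNIV" by simp
    ultimately show "y \<in> (\<lambda>c. \<Sum>i<d. to_ac (c i) * \<alpha> ^ i) ` ({..<d} \<rightarrow>\<^sub>E UNIV)"
      by (rule image_eqI)
  qed
qed auto

lemma finite_span_powers: "finite (span_powers d (\<alpha> :: 'a::{finite,field} alg_closure))"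
  by (simp add: span_powers_eq_image_PiE finite_PiE)

lemma zero_in_span_powers: "0 \<in> span_powers d \<alpha>"
  using rangeI[of "\<lambda>c. \<Sum>i<d. to_ac (c i) * \<alpha> ^ i" "\<lambda>_. 0"] by (simp add: span_powers_def)

lemma one_in_span_powers:
  assumes "d \<noteq> 0"
  shows "1 \<in> span_powers d \<alpha>"
proof -
  have "(\<Sum>i<d. to_ac (if i = 0 then 1 else 0) * \<alpha> ^ i) = (\<Sum>i<d. if i = 0 then 1 else 0)"
    by (intro sum.cong) auto
  also have "\<dots> = 1" using assms by simp
  finally have "(\<Sum>i<d. to_ac (if i = 0 then 1 else 0) * \<alpha> ^ i) = 1" .
  thus ?thesis using rangeI[of "\<lambda>c. \<Sum>i<d. to_ac (c i) * \<alpha> ^ i" "\<lambda>i. if i = 0 then 1 else 0"]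
    by (simp add: span_powers_def)
qed

lemma card_span_powers:
  fixes \<alpha> :: "'a::{finite,field} alg_closure"
  assumes "powers_independent d \<alpha>"
  shows "card (span_powers d \<alpha>) = CARD('a) ^ d"
proof -
  have "inj_on (\<lambda>c. \<Sum>i<d. to_ac (c i) * \<alpha> ^ i) ({..<d} \<rightarrow>\<^sub>E UNIV)"
  proof (rule inj_onI)
    fix b b' :: "nat \<Rightarrow> 'a" assume bb: "b \<in> {..<d} \<rightarrow>\<^sub>E UNIV" "b' \<in> {..<d} \<rightarrow>\<^sub>E UNIV"
      and eq: "(\<Sum>i<d. to_ac (b i) * \<alpha> ^ i) = (\<Sum>i<d. to_ac (b' i) * \<alpha> ^ i)"
    have diff: "(\<Sum>i<d. to_ac (b i - b' i) * \<alpha> ^ i) = 0"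
      using eq by (simp add: sum_subtractf left_diff_distrib)
    have "b i = b' i" if "i < d" for i using powers_independentD[OF assms diff that] by simp
    thus "b = b'" using bb by (intro PiE_ext) auto
  qed
  hence "card (span_powers d \<alpha>) = card ({..<d} \<rightarrow>\<^sub>E (UNIV :: 'a set))"
    unfolding span_powers_eq_image_PiE by (rule card_image)
  thus ?thesis by (simp add: card_PiE)
qed

lemma span_powers_mult_closed:
  assumes "\<alpha> ^ d \<in> span_powers d \<alpha>" and "y \<in> span_powers d \<alpha>"
  shows "\<alpha> * y \<in> span_powers d \<alpha>"
proof -
  obtain a where a: "\<alpha> ^ d = (\<Sum>i<d. to_ac (a i) * \<alpha> ^ i)" using assms(1) by (auto simp: span_powers_def)
  obtain b where b: "y = (\<Sum>i<d. to_ac (b i) * \<alpha> ^ i)" using assms(2) by (auto simp: span_powers_def)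
  show ?thesis
  proof (cases d)
    case 0
    thus ?thesis using b by (simp add: span_powers_def)
  next
    case (Suc d')
    define b' where "b' i = (if i = 0 then 0 else b (i - 1)) + b d' * a i" for i
    have "\<alpha> * y = (\<Sum>i<d'. to_ac (b i) * \<alpha> ^ Suc i) + to_ac (b d') * \<alpha> ^ d"
      unfolding b Suc sum_distrib_left by (simp add: mult_ac)
    also have "(\<Sum>i<d'. to_ac (b i) * \<alpha> ^ Suc i) = (\<Sum>i<d. to_ac (if i = 0 then 0 else b (i - 1)) * \<alpha> ^ i)"
      unfolding Suc sum.lessThan_Suc_shift by simp
    also have "\<dots> + to_ac (b d') * \<alpha> ^ d = (\<Sum>i<d. to_ac (b' i) * \<alpha> ^ i)"
      unfolding a b'_def by (simp add: sum.distrib sum_distrib_left distrib_right mult.assoc)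
    finally show ?thesis by (simp add: span_powers_def)
  qed
qed

lemma not_powers_independent_imp_minimal:
  assumes "\<not> powers_independent N \<alpha>"
  obtains d where "d < N" "powers_independent d \<alpha>" "\<not> powers_independent (Suc d) \<alpha>"
proof -
  let ?P = "\<lambda>d. \<not> powers_independent (Suc d) \<alpha>"
  define d where "d = (LEAST d. ?P d)"
  have "powers_independent 0 \<alpha>" by (simp add: powers_independent_def)
  hence "N \<noteq> 0" using assms by metis
  hence ex: "?P (N - 1)" using assms by simp
  have "?P d" unfolding d_def by (rule LeastI[of ?P, OF ex])
  moreover have "d \<le> N - 1" unfolding d_def by (rule Least_le[of ?P, OF ex])
  moreover have "powers_independent d \<alpha>"
  proof (cases d)
    case (Suc d')
    have "d' < d" using Suc by simp
    hence "\<not> ?P d'" unfolding d_def by (rule not_less_Least)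
    thus ?thesis using Suc by simp
  qed (simp add: powers_independent_def)
  moreover have "d < N" using \<open>d \<le> N - 1\<close> \<open>N \<noteq> 0\<close> by linarith
  ultimately show ?thesis using that by blast
qed

lemma power_in_span_powers:
  assumes "powers_independent d \<alpha>" "\<not> powers_independent (Suc d) \<alpha>"
  shows "\<alpha> ^ d \<in> span_powers d \<alpha>"
proof -
  obtain c :: "nat \<Rightarrow> 'a" and j where c: "(\<Sum>i<Suc d. to_ac (c i) * \<alpha> ^ i) = 0" "j \<le> d" "c j \<noteq> 0"
    using assms(2) unfolding powers_independent_def by (auto simp: less_Suc_eq_le)
  have "c d \<noteq> 0"
  proof
    assume "c d = 0"
    hence "(\<Sum>i<d. to_ac (c i) * \<alpha> ^ i) = 0" using c(1) by simp
    hence "c i = 0" if "i < d" for i using powers_independentD[OF assms(1) _ that] by blast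
    thus False using c(2,3) \<open>c d = 0\<close> le_neq_implies_less by blast
  qed
  have "to_ac (c d) * \<alpha> ^ d = - (\<Sum>i<d. to_ac (c i) * \<alpha> ^ i)"
    using c(1) by (simp add: eq_neg_iff_add_eq_0 add.commute)
  also have "\<dots> = (\<Sum>i<d. to_ac (c d * (- c i / c d)) * \<alpha> ^ i)"
    using \<open>c d \<noteq> 0\<close> by (simp add: sum_negf)
  also have "\<dots> = to_ac (c d) * (\<Sum>i<d. to_ac (- c i / c d) * \<alpha> ^ i)"
    by (simp only: sum_distrib_left to_ac_mult mult.assoc)
  finally have eq: "\<alpha> ^ d = (\<Sum>i<d. to_ac (- c i / c d) * \<alpha> ^ i)"
    using \<open>c d \<noteq> 0\<close> by (subst (asm) mult_left_cancel) simp_all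
  show ?thesis unfolding span_powers_def eq by (rule rangeI)
qed

lemma not_powers_independent_imp_frob_fixed:
  fixes \<alpha> :: "'a::{finite,field} alg_closure"
  assumes "\<not> powers_independent N \<alpha>"
  obtains d where "1 \<le> d" "d < N" "\<alpha> \<in> frob_fixed d"
proof -
  obtain d where d: "d < N" "powers_independent d \<alpha>" "\<not> powers_independent (Suc d) \<alpha>"
    using not_powers_independent_imp_minimal[OF assms] by blast
  let ?S = "span_powers d \<alpha>"
  have "d \<noteq> 0"
  proof
    assume "d = 0"
    hence "powers_independent (Suc d) \<alpha>" by (simp add: powers_independent_def)
    thus False using d(3) by contradiction
  qed
  have closed: "\<alpha> * y \<in> ?S" if "y \<in> ?S" for y
    using span_powers_mult_closed[OF power_in_span_powers[OF d(2,3)] that] .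
  have "\<alpha> \<in> ?S" using closed[OF one_in_span_powers[OF \<open>d \<noteq> 0\<close>]] by simp
  have "\<alpha> ^ card ?S = \<alpha>"
    by (rule power_card_eq_self[OF finite_span_powers zero_in_span_powers \<open>\<alpha> \<in> ?S\<close> closed])
  hence "\<alpha> \<in> frob_fixed d" by (simp add: frob_fixed_def card_span_powers[OF d(2)])
  moreover have "1 \<le> d" using \<open>d \<noteq> 0\<close> by simp
  ultimately show ?thesis using that d(1) by blast
qed

lemma sum_powers_less_power:
  fixes q :: nat
  assumes "q \<ge> 2"
  shows "(\<Sum>d<N. q ^ d) < q ^ N"
proof (induction N)
  case (Suc N)
  have "(\<Sum>d<Suc N. q ^ d) < q ^ N + q ^ N" using Suc by simp
  also have "\<dots> \<le> q ^ Suc N" using mult_le_mono1[OF assms, of "q ^ N"] by (simp add: mult_2)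
  finally show ?case .
qed simp

lemma ex_powers_independent_frob_fixed:
  assumes "N \<ge> 1"
  obtains \<alpha> :: "'a::{finite,field} alg_closure" where "\<alpha> \<in> frob_fixed N" "powers_independent N \<alpha>"
proof (rule ccontr)
  assume "\<not> thesis"
  have "frob_fixed N \<subseteq> (\<Union>d\<in>{1..<N}. frob_fixed d :: 'a alg_closure set)"
  proof
    fix \<alpha> :: "'a alg_closure" assume "\<alpha> \<in> frob_fixed N"
    hence "\<not> powers_independent N \<alpha>" using that \<open>\<not> thesis\<close> by blast
    then obtain d where "1 \<le> d" "d < N" "\<alpha> \<in> frob_fixed d"
      by (rule not_powers_independent_imp_frob_fixed)
    thus "\<alpha> \<in> (\<Union>d\<in>{1..<N}. frob_fixed d)" by auto
  qed
  hence "card (frob_fixed N :: 'a alg_closure set) \<le> card (\<Union>d\<in>{1..<N}. frob_fixed d :: 'a alg_closure set)"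
    by (rule card_mono[rotated]) (simp add: finite_card_frob_fixed(1))
  also have "\<dots> \<le> (\<Sum>d\<in>{1..<N}. card (frob_fixed d :: 'a alg_closure set))" by (rule card_UN_le) simp
  also have "\<dots> = (\<Sum>d\<in>{1..<N}. CARD('a) ^ d)" by (intro sum.cong) (simp_all add: finite_card_frob_fixed(2))
  also have "\<dots> \<le> (\<Sum>d<N. CARD('a) ^ d)" by (intro sum_mono2) auto
  also have "\<dots> < CARD('a) ^ N" using card_mono[of UNIV "{0::'a, 1}"] by (intro sum_powers_less_power) simp
  finally show False using finite_card_frob_fixed(2)[OF assms, where 'a = 'a] by simp
qed

section \<open>Matrices of rank one\<close>

lemma rank_column_matrix:
  fixes u :: "'a::field vec"
  assumes u: "u \<in> carrier_vec N" "u \<noteq> 0\<^sub>v N" and "n \<ge> 1"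
  shows "vec_space.rank N (mat N n (\<lambda>(i, j). if j = 0 then u $ i else 0)) = 1"
proof -
  interpret vec_space "TYPE('a)" N .
  define E where "E = mat N n (\<lambda>(i, j). if j = 0 then u $ i else 0)"
  have E: "E \<in> carrier_mat N n" unfolding E_def by simp
  have "rank E \<le> 1"
    by (rule rank_le_1_product_entries[OF E, of "\<lambda>i. u $ i" "\<lambda>j. if j = 0 then 1 else 0"])
       (auto simp: E_def)
  moreover have "rank E \<ge> card {u}"
  proof (rule rank_ge_card_indpt[OF E])
    have "col E 0 = u" using u \<open>n \<ge> 1\<close> unfolding E_def by (intro eq_vecI) auto
    thus "{u} \<subseteq> set (cols E)" using \<open>n \<ge> 1\<close> E by (auto simp: cols_def)
    show "lin_indpt {u}"
    proof
      assume "lin_dep {u}"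
      then obtain f where f: "lincomb f {u} = 0\<^sub>v N" "f u \<noteq> 0"
        using finite_lin_dep[of "{u}"] u by auto
      have "u = 0\<^sub>v N"
      proof (rule eq_vecI)
        fix i assume i: "i < dim_vec (0\<^sub>v N :: 'a vec)"
        hence "lincomb f {u} $ i = f u * u $ i" using u by (subst lincomb_index) auto
        thus "u $ i = 0\<^sub>v N $ i" using f i by simp
      qed (use u in simp)
      thus False using u by simp
    qed
  qed
  ultimately show ?thesis unfolding E_def by simp
qed

lemma rank_le_one_col_multiple:
  fixes D :: "'a::field mat"
  assumes D: "D \<in> carrier_mat N n" and rank: "vec_space.rank N D \<le> 1"
    and j0: "j0 < n" "i0 < N" "D $$ (i0, j0) \<noteq> 0" and j: "j < n"
  shows "\<exists>k. \<forall>i<N. D $$ (i, j) = D $$ (i, j0) * k"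
proof -
  interpret vec_space "TYPE('a)" N .
  define u where "u = col D j0"
  define c where "c = col D j"
  have uc: "u \<in> carrier_vec N" "c \<in> carrier_vec N" using D j j0 by (simp_all add: u_def c_def)
  have ent: "D $$ (i, j) = c $ i" "D $$ (i, j0) = u $ i" if "i < N" for i
    using D j j0 that by (simp_all add: u_def c_def)
  show ?thesis
  proof (cases "c = u")
    case True
    thus ?thesis using ent by (intro exI[of _ 1]) auto
  next
    case False
    have "lin_dep {u, c}"
    proof (rule ccontr)
      assume "\<not> lin_dep {u, c}"
      moreover have "{u, c} \<subseteq> set (cols D)" using D j j0 by (auto simp: cols_def u_def c_def)
      ultimately have "rank D \<ge> card {u, c}" by (intro rank_ge_card_indpt[OF D])
      thus False using rank False by simp
    qed
    then obtain f v where f: "lincomb f {u, c} = 0\<^sub>v N" "v \<in> {u, c}" "f v \<noteq> 0"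
      using finite_lin_dep[of "{u, c}"] uc by auto
    have lc: "f u * u $ i + f c * c $ i = 0" if "i < N" for i
    proof -
      have "lincomb f {u, c} $ i = f u * u $ i + f c * c $ i"
        using uc False that by (subst lincomb_index) auto
      thus ?thesis using f(1) that by simp
    qed
    have "f c \<noteq> 0"
    proof
      assume "f c = 0"
      hence "f u \<noteq> 0" using f(2,3) by auto
      moreover have "f u * u $ i0 = 0" using lc[OF j0(2)] \<open>f c = 0\<close> by simp
      ultimately show False using ent(2)[OF j0(2)] j0(3) by simp
    qed
    show ?thesis
    proof (intro exI[of _ "- f u / f c"] allI impI)
      fix i assume "i < N"
      hence "c $ i = (- f u / f c) * (u $ i)" using lc \<open>f c \<noteq> 0\<close> by (simp add: field_simps eq_neg_iff_add_eq_0)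
      thus "D $$ (i, j) = D $$ (i, j0) * (- f u / f c)" using ent \<open>i < N\<close> by (simp add: mult.commute)
    qed
  qed
qed

lemma rank_one_imp_outer_product:
  fixes D :: "'a::field mat"
  assumes D: "D \<in> carrier_mat N n" and rank: "vec_space.rank N D = 1"
  obtains a b where "\<exists>i<N. a i \<noteq> 0" "\<exists>j<n. b j \<noteq> 0" "\<And>i j. i < N \<Longrightarrow> j < n \<Longrightarrow> D $$ (i, j) = a i * b j"
proof -
  interpret vec_space "TYPE('a)" N .
  have "D \<noteq> 0\<^sub>m N n" using rank rank_0I by auto
  have "\<exists>i<N. \<exists>j<n. D $$ (i, j) \<noteq> 0"
  proof (rule ccontr)
    assume "\<not> ?thesis"
    hence "D = 0\<^sub>m N n" using D by (intro eq_matI) auto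
    thus False using \<open>D \<noteq> 0\<^sub>m N n\<close> by contradiction
  qed
  then obtain i0 j0 where ij0: "i0 < N" "j0 < n" "D $$ (i0, j0) \<noteq> 0" by blast
  have "\<forall>j\<in>{..<n}. \<exists>k. \<forall>i<N. D $$ (i, j) = D $$ (i, j0) * k"
    using rank_le_one_col_multiple[OF D _ ij0(2,1,3)] rank by simp
  then obtain b where b: "\<And>i j. j < n \<Longrightarrow> i < N \<Longrightarrow> D $$ (i, j) = D $$ (i, j0) * b j"
    by (metis bchoice lessThan_iff)
  have "b j0 = 1" using b[OF ij0(2,1)] ij0(3) by (simp add: mult_cancel_left1)
  show ?thesis
  proof (rule that[of "\<lambda>i. D $$ (i, j0)" b])
    show "\<exists>i<N. D $$ (i, j0) \<noteq> 0" "\<exists>j<n. b j \<noteq> 0" using ij0 \<open>b j0 = 1\<close> by auto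
  qed (use b in simp)
qed

section \<open>Colourings\<close>

definition power_form :: "'a::field alg_closure \<Rightarrow> 'a mat \<Rightarrow> 'a alg_closure" where
  "power_form \<alpha> M = (\<Sum>i<dim_row M. \<Sum>j<dim_col M. to_ac (M $$ (i, j)) * \<alpha> ^ i * \<alpha> ^ j)"

lemma power_form_diff:
  assumes "M1 \<in> carrier_mat N n" "M2 \<in> carrier_mat N n"
  shows "power_form \<alpha> (M1 - M2) = power_form \<alpha> M1 - power_form \<alpha> M2"
  using assms by (simp add: power_form_def sum_subtractf left_diff_distrib)

lemma power_form_outer_product:
  assumes "M \<in> carrier_mat N n" and "\<And>i j. i < N \<Longrightarrow> j < n \<Longrightarrow> M $$ (i, j) = a i * b j"
  shows "power_form \<alpha> M = (\<Sum>i<N. to_ac (a i) * \<alpha> ^ i) * (\<Sum>j<n. to_ac (b j) * \<alpha> ^ j)"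
  using assms by (simp add: power_form_def sum_product mult_ac)

lemma power_form_frob_fixed:
  "\<alpha> \<in> frob_fixed m \<Longrightarrow> power_form \<alpha> M \<in> frob_fixed m"
  unfolding power_form_def
  by (intro frob_fixed_sum frob_fixed_mult frob_fixed_to_ac frob_fixed_power)

lemma power_form_rank_one_nonzero:
  assumes "powers_independent N \<alpha>" "n \<le> N"
    and "D \<in> carrier_mat N n" "vec_space.rank N D = 1"
  shows "power_form \<alpha> D \<noteq> 0"
proof -
  obtain a b where a: "\<exists>i<N. a i \<noteq> 0" and b: "\<exists>j<n. b j \<noteq> 0"
    and D: "\<And>i j. i < N \<Longrightarrow> j < n \<Longrightarrow> D $$ (i, j) = a i * b j"
    using rank_one_imp_outer_product[OF assms(3,4)] by blast
  have "(\<Sum>i<N. to_ac (a i) * \<alpha> ^ i) \<noteq> 0"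
    using a powers_independentD[OF assms(1)] by blast
  moreover have "(\<Sum>j<n. to_ac (b j) * \<alpha> ^ j) \<noteq> 0"
    using b powers_independentD[OF powers_independent_mono[OF assms(1,2)]] by blast
  ultimately show ?thesis using power_form_outer_product[OF assms(3) D] by simp
qed

lemma ex_exact_dist_coloring_1:
  assumes "1 \<le> n" "n \<le> N"
  shows "\<exists>\<Gamma> :: 'a::{finite,field} mat \<Rightarrow> nat. exact_dist_coloring N n 1 (CARD('a) ^ N) \<Gamma>"
proof -
  have "1 \<le> N" using assms by simp
  then obtain \<alpha> :: "'a alg_closure" where \<alpha>: "\<alpha> \<in> frob_fixed N" "powers_independent N \<alpha>"
    by (rule ex_powers_independent_frob_fixed)
  let ?K = "frob_fixed N :: 'a alg_closure set"
  obtain h where "bij_betw h ?K {0..<card ?K}"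
    using ex_bij_betw_finite_nat[OF finite_card_frob_fixed(1)[OF \<open>1 \<le> N\<close>]] by blast
  hence h: "bij_betw h ?K {0..<CARD('a) ^ N}" by (simp only: finite_card_frob_fixed(2)[OF \<open>1 \<le> N\<close>])
  define \<Gamma> where "\<Gamma> M = Suc (h (power_form \<alpha> M))" for M :: "'a mat"
  have "\<Gamma> M \<in> {1..CARD('a) ^ N}" for M
    using bij_betw_apply[OF h power_form_frob_fixed[OF \<alpha>(1)]] by (auto simp: \<Gamma>_def Suc_le_eq)
  moreover have "\<Gamma> M1 \<noteq> \<Gamma> M2"
    if "M1 \<in> carrier_mat N n" "M2 \<in> carrier_mat N n" "vec_space.rank N (M1 - M2) = 1" for M1 M2
  proof
    assume "\<Gamma> M1 = \<Gamma> M2"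
    hence "power_form \<alpha> M1 = power_form \<alpha> M2"
      using bij_betw_imp_inj_on[OF h] power_form_frob_fixed[OF \<alpha>(1)] by (auto simp: \<Gamma>_def inj_on_eq_iff)
    hence "power_form \<alpha> (M1 - M2) = 0" using power_form_diff[OF that(1,2)] by simp
    thus False using power_form_rank_one_nonzero[OF \<alpha>(2) assms(2) minus_carrier_mat[OF that(2)] that(3)]
      by contradiction
  qed
  ultimately show ?thesis unfolding exact_dist_coloring_def by blast
qed

lemma exact_dist_coloring_1_card_le:
  fixes \<Gamma> :: "'a::{finite,field} mat \<Rightarrow> nat"
  assumes col: "exact_dist_coloring N n 1 L \<Gamma>" and "n \<ge> 1"
  shows "CARD('a) ^ N \<le> L"
proof -
  define E where "E v = mat N n (\<lambda>(i, j). if j = 0 then v $ i else (0::'a))" for v :: "'a vec"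
  have E: "E v \<in> carrier_mat N n" for v by (simp add: E_def)
  have inj: "inj_on (\<Gamma> \<circ> E) (carrier_vec N)"
  proof (rule inj_onI, rule ccontr)
    fix v w :: "'a vec" assume vw: "v \<in> carrier_vec N" "w \<in> carrier_vec N" "(\<Gamma> \<circ> E) v = (\<Gamma> \<circ> E) w" "v \<noteq> w"
    have "E v - E w = E (v - w)" using vw by (intro eq_matI) (auto simp: E_def)
    moreover have "v - w \<noteq> 0\<^sub>v N"
    proof
      assume "v - w = 0\<^sub>v N"
      hence "(v - w) $ i = 0" if "i < N" for i using that by simp
      hence "v = w" using vw by (intro eq_vecI) auto
      thus False using vw(4) by contradiction
    qed
    ultimately have "vec_space.rank N (E v - E w) = 1"
      unfolding E_def using vw \<open>n \<ge> 1\<close> by (simp add: rank_column_matrix)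
    thus False using col vw E unfolding exact_dist_coloring_def by auto
  qed
  have colors: "(\<Gamma> \<circ> E) ` carrier_vec N \<subseteq> {1..L}" using col E unfolding exact_dist_coloring_def by auto
  have "CARD('a) ^ N = card ((\<Gamma> \<circ> E) ` carrier_vec N)" by (simp only: card_image[OF inj] card_carrier_vec)
  also have "\<dots> \<le> card {1..L}" by (rule card_mono[OF finite_atLeastAtMost colors])
  finally show ?thesis by simp
qed

theorem proposition4p1:
  fixes N n :: nat
  assumes "1 \<le> n" and "n \<le> N"
  shows "chi 1 N n TYPE('a::{finite,field}) = card (UNIV :: 'a set) ^ N"
  unfolding chi_def
proof (rule Least_equality)
  show "\<exists>\<Gamma> :: 'a mat \<Rightarrow> nat. exact_dist_coloring N n 1 (CARD('a) ^ N) \<Gamma>"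
    by (rule ex_exact_dist_coloring_1[OF assms])
  show "CARD('a) ^ N \<le> L" if "\<exists>\<Gamma> :: 'a mat \<Rightarrow> nat. exact_dist_coloring N n 1 L \<Gamma>" for L
    using that exact_dist_coloring_1_card_le assms(1) by blast
qed

end
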